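(* Let $A$ be a minimally AP-irreducible sign pattern matrix with all diagonal entries equal to $0$ such that $A[\alpha,\beta]$ contains no $+$ for any two distinct irreducible components $\alpha$ and $\beta$ of $A_+$. Suppose that $Q(A)$ contains an algebraically positive matrix having a simple positive eigenvalue with corresponding entrywise positive left and right eigenvectors. If $X$ is a super-pattern of $A$ such that $x_{ij}\neq a_{ij}$ for precisely one ordered pair $(i,j)$, then $Q(X)$ also contains an algebraically positive matrix having a simple positive eigenvalue with corresponding entrywise positive left and right eigenvectors.
   Context: A sign pattern matrix has entries in $\{+,-,0\}$; its qualitative class $Q(A)$ is the set of real matrices obtained by replacing each $+$ by some positive number, each $-$ by some negative number and each $0$ by $0$. A real square matrix $M$ is algebraically positive if there is a real polynomial $f$ with $f(M)$ entrywise positive. $X$ is a super-pattern of $A$ if $A$ is obtained from $X$ by replacing some (possibly none) nonzero entries with $0$. The digraph $D(M)$ of an $n\times n$ matrix $M$ has vertex set $\{1,\dots,n\}$ and an arc $i\to j$ iff $m_{ij}\neq0$; $M$ is irreducible if $n=1$ or $D(M)$ is strongly connected. For a sign pattern $A$: $A_+$ is obtained by replacing every entry that is not $+$ by $0$; $B_A$ is the sign pattern with $(B_A)_{ij}=+$ if $a_{ij}=+$ or $a_{ji}=-$, and $0$ otherwise. An irreducible sign pattern $A$ is AP-irreducible if every row and every column contains a $+$ and $B_A$ is irreducible; it is minimally AP-irreducible if it is AP-irreducible and does not remain so after replacing any single nonzero entry by $0$. $A[\alpha,\beta]$ is the submatrix with rows in $\alpha$ and columns in $\beta$. The irreducible components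 of a sign pattern $M$ are the vertex sets of the strongly connected components of $D(M)$ (maximal $\alpha$ with $M[\alpha,\alpha]$ irreducible). *)

theory Defs
  imports "Jordan_Normal_Form.Jordan_Normal_Form"
begin

datatype sign = Pos | Neg | Zer

definition qual_class :: "sign mat \<Rightarrow> real mat set" where
  "qual_class A = {M. M \<in> carrier_mat (dim_row A) (dim_col A) \<and>
     (\<forall>i < dim_row A. \<forall>j < dim_col A.
        (A $$ (i,j) = Pos \<longrightarrow> M $$ (i,j) > 0) \<and>
        (A $$ (i,j) = Neg \<longrightarrow> M $$ (i,j) < 0) \<and>
        (A $$ (i,j) = Zer \<longrightarrow> M $$ (i,j) = 0))}"

definition poly_mat :: "real poly \<Rightarrow> real mat \<Rightarrow> real mat" where
  "poly_mat f M = mat (dim_row M) (dim_row M)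
     (\<lambda>(i,j). \<Sum>k\<le>degree f. coeff f k * (M ^\<^sub>m k) $$ (i,j))"

definition alg_positive :: "real mat \<Rightarrow> bool" where
  "alg_positive M \<longleftrightarrow> (\<exists>f. \<forall>i < dim_row M. \<forall>j < dim_row M. poly_mat f M $$ (i,j) > 0)"

definition good_matrix :: "real mat \<Rightarrow> bool" where
  "good_matrix M \<longleftrightarrow> alg_positive M \<and>
     (\<exists>lam > 0. order lam (char_poly M) = 1 \<and>
        (\<exists>v w. eigenvector M v lam \<and> eigenvector (transpose_mat M) w lam \<and>
               (\<forall>i < dim_row M. v $ i > 0 \<and> w $ i > 0)))"

definition arcs :: "sign mat \<Rightarrow> (nat \<times> nat) set" where
  "arcs A = {(i,j). i < dim_row A \<and> j < dim_row A \<and> A $$ (i,j) \<noteq> Zer}"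

definition irreducible_pat :: "sign mat \<Rightarrow> bool" where
  "irreducible_pat A \<longleftrightarrow> dim_row A = 1 \<or>
     (\<forall>i < dim_row A. \<forall>j < dim_row A. (i,j) \<in> (arcs A)\<^sup>*)"

definition pos_part :: "sign mat \<Rightarrow> sign mat" where
  "pos_part A = map_mat (\<lambda>x. if x = Pos then Pos else Zer) A"

definition B_pat :: "sign mat \<Rightarrow> sign mat" where
  "B_pat A = mat (dim_row A) (dim_row A)
     (\<lambda>(i,j). if A $$ (i,j) = Pos \<or> A $$ (j,i) = Neg then Pos else Zer)"

definition AP_irreducible :: "sign mat \<Rightarrow> bool" where
  "AP_irreducible A \<longleftrightarrow> irreducible_pat A \<and>
     (\<forall>i < dim_row A. \<exists>j < dim_row A. A $$ (i,j) = Pos) \<and>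
     (\<forall>j < dim_row A. \<exists>i < dim_row A. A $$ (i,j) = Pos) \<and>
     irreducible_pat (B_pat A)"

definition min_AP_irreducible :: "sign mat \<Rightarrow> bool" where
  "min_AP_irreducible A \<longleftrightarrow> AP_irreducible A \<and>
     (\<forall>i < dim_row A. \<forall>j < dim_row A. A $$ (i,j) \<noteq> Zer \<longrightarrow>
        \<not> AP_irreducible (mat (dim_row A) (dim_row A) (\<lambda>(k,l). if (k,l) = (i,j) then Zer else A $$ (k,l))))"

definition scc_of :: "sign mat \<Rightarrow> nat \<Rightarrow> nat set" where
  "scc_of M i = {j. j < dim_row M \<and> (i,j) \<in> (arcs M)\<^sup>* \<and> (j,i) \<in> (arcs M)\<^sup>*}"

definition irr_components :: "sign mat \<Rightarrow> nat set set" where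
  "irr_components M = scc_of M ` {..<dim_row M}"

definition super_pattern :: "sign mat \<Rightarrow> sign mat \<Rightarrow> bool" where
  "super_pattern X A \<longleftrightarrow> dim_row X = dim_row A \<and> dim_col X = dim_col A \<and>
     (\<forall>i < dim_row A. \<forall>j < dim_col A. X $$ (i,j) = A $$ (i,j) \<or> A $$ (i,j) = Zer)"

end

theory Submission
  imports Defs
begin

(* Goodness is an open condition on the entries of a matrix, and for a good M in Q(A) the
   matrix M + e S, where S has the signs of X, lies in Q(X) for every e > 0. Algebraic
   positivity is open because f(M) depends continuously on M. A simple real eigenvalue lam
   survives a small perturbation as a nearby real root of the characteristic polynomial,
   which changes sign at lam. At a simple eigenvalue the adjugate of M - lam I is a nonzero
   multiple of v w^T, with v and w the right and left eigenvectors, so its entries have a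
   common strict sign; this persists for nearby matrices and eigenvalues, and the columns and
   rows of the adjugate are then positive right and left eigenvectors.
   Only the existence of a good matrix in Q(A) and the super-pattern relation are used. *)

section \<open>Continuity of determinants, cofactors and matrix powers\<close>

lemma tendsto_det:
  fixes B :: "'b \<Rightarrow> 'a::real_normed_field mat"
  assumes B: "\<And>t. B t \<in> carrier_mat n n" and B0: "B0 \<in> carrier_mat n n"
    and lim: "\<And>i j. i < n \<Longrightarrow> j < n \<Longrightarrow> ((\<lambda>t. B t $$ (i,j)) \<longlongrightarrow> B0 $$ (i,j)) F"
  shows "((\<lambda>t. det (B t)) \<longlongrightarrow> det B0) F"
proof -
  have "((\<lambda>t. \<Sum>p | p permutes {0..<n}. signof p * (\<Prod>i = 0..<n. B t $$ (i, p i)))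
     \<longlongrightarrow> (\<Sum>p | p permutes {0..<n}. signof p * (\<Prod>i = 0..<n. B0 $$ (i, p i)))) F"
  proof (intro tendsto_sum tendsto_mult tendsto_const tendsto_prod)
    fix p i assume "p \<in> {p. p permutes {0..<n}}" and i: "i \<in> {0..<n}"
    then have "p i < n" by (simp add: permutes_in_image)
    with i show "((\<lambda>t. B t $$ (i, p i)) \<longlongrightarrow> B0 $$ (i, p i)) F" by (intro lim) auto
  qed
  then show ?thesis by (simp add: det_def'[OF B] det_def'[OF B0])
qed

lemma tendsto_cofactor:
  fixes B :: "'b \<Rightarrow> 'a::real_normed_field mat"
  assumes B: "\<And>t. B t \<in> carrier_mat n n" and B0: "B0 \<in> carrier_mat n n"
    and lim: "\<And>i j. i < n \<Longrightarrow> j < n \<Longrightarrow> ((\<lambda>t. B t $$ (i,j)) \<longlongrightarrow> B0 $$ (i,j)) F"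
    and k: "k < n" and l: "l < n"
  shows "((\<lambda>t. cofactor (B t) k l) \<longlongrightarrow> cofactor B0 k l) F"
proof -
  have "((\<lambda>t. det (mat_delete (B t) k l)) \<longlongrightarrow> det (mat_delete B0 k l)) F"
  proof (rule tendsto_det[OF mat_delete_carrier[OF B] mat_delete_carrier[OF B0]])
    fix i j assume "i < n - 1" and "j < n - 1"
    moreover have "dim_row (B t) = n" "dim_col (B t) = n" for t using B[of t] by auto
    ultimately show "((\<lambda>t. mat_delete (B t) k l $$ (i, j)) \<longlongrightarrow> mat_delete B0 k l $$ (i, j)) F"
      using B0 by (auto simp: mat_delete_def intro!: lim)
  qed
  then show ?thesis unfolding cofactor_def by (intro tendsto_mult tendsto_const)
qed

lemma tendsto_power_mat:
  fixes B :: "'b \<Rightarrow> 'a::real_normed_field mat"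
  assumes B: "\<And>t. B t \<in> carrier_mat n n" and B0: "B0 \<in> carrier_mat n n"
    and lim: "\<And>i j. i < n \<Longrightarrow> j < n \<Longrightarrow> ((\<lambda>t. B t $$ (i,j)) \<longlongrightarrow> B0 $$ (i,j)) F"
    and i: "i < n" and j: "j < n"
  shows "((\<lambda>t. (B t ^\<^sub>m k) $$ (i,j)) \<longlongrightarrow> (B0 ^\<^sub>m k) $$ (i,j)) F"
  using i j
proof (induction k arbitrary: i j)
  case 0
  have "dim_row (B t) = n" for t using B[of t] by auto
  with B0 show ?case by simp
next
  case (Suc k)
  have entry: "(C ^\<^sub>m Suc k) $$ (i,j) = (\<Sum>l<n. (C ^\<^sub>m k) $$ (i,l) * C $$ (l,j))"
    if "C \<in> carrier_mat n n" for C
    using that Suc.prems by (auto simp: scalar_prod_def atLeast0LessThan intro!: sum.cong)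
  show ?case
    unfolding entry[OF B] entry[OF B0] by (intro tendsto_sum tendsto_mult Suc.IH lim) (use Suc.prems in auto)
qed

section \<open>Cofactors of a singular matrix\<close>

lemma cofactor_transpose_mat:
  assumes "N \<in> carrier_mat n n"
  shows "cofactor (transpose_mat N) k l = cofactor N l k"
proof -
  have "mat_delete (transpose_mat N) k l = transpose_mat (mat_delete N l k)"
    using assms by (intro eq_matI) (auto simp: mat_delete_def)
  then show ?thesis
    unfolding cofactor_def by (simp add: det_transpose[OF mat_delete_carrier[OF assms]] add.commute)
qed

lemma det_replace_row_unit:
  fixes N :: "'a::comm_ring_1 mat"
  assumes N: "N \<in> carrier_mat n n" and k: "k < n" and l: "l < n"
  shows "det (mat n n (\<lambda>(i,j). if i = k then (if j = l then 1 else 0) else N $$ (i,j))) =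
    cofactor N k l"
proof -
  define G where "G = mat n n (\<lambda>(i,j). if i = k then (if j = l then 1 else 0) else N $$ (i,j))"
  have G: "G \<in> carrier_mat n n" by (simp add: G_def)
  have delete_G: "mat_delete G k j = mat_delete N k j" for j
    using N by (intro eq_matI) (auto simp: G_def mat_delete_def insert_index_def)
  have "det G = (\<Sum>j<n. G $$ (k,j) * cofactor G k j)" by (rule laplace_expansion_row[OF G k])
  also have "\<dots> = (\<Sum>j<n. if j = l then cofactor G k j else 0)"
    by (intro sum.cong) (auto simp: G_def k)
  also have "\<dots> = cofactor N k l"
    using l by (simp add: cofactor_def delete_G)
  finally show ?thesis unfolding G_def .
qed

lemma cofactor_right_null_vector:
  fixes N :: "'a::comm_ring_1 mat"
  assumes N: "N \<in> carrier_mat n n" and v: "v \<in> carrier_vec n" and Nv: "N *\<^sub>v v = 0\<^sub>v n"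
    and k: "k < n" and l: "l < n" and m: "m < n"
  shows "v $ m * cofactor N k l = v $ l * cofactor N k m"
proof -
  \<comment> \<open>Replacing row k of N by the l-th unit row gives a matrix G with G v = v_l e_k;
    apply Cramer's rule to G in column m.\<close>
  define G where "G = mat n n (\<lambda>(i,j). if i = k then (if j = l then 1 else 0) else N $$ (i,j))"
  have G: "G \<in> carrier_mat n n" by (simp add: G_def)
  have det_G: "det G = cofactor N k l" unfolding G_def by (rule det_replace_row_unit[OF N k l])
  have Gv: "G *\<^sub>v v = v $ l \<cdot>\<^sub>v unit_vec n k"
  proof (rule eq_vecI)
    fix i assume "i < dim_vec (v $ l \<cdot>\<^sub>v unit_vec n k)"
    then have i: "i < n" by simp
    show "(G *\<^sub>v v) $ i = (v $ l \<cdot>\<^sub>v unit_vec n k) $ i"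
    proof (cases "i = k")
      case True
      with i l v show ?thesis
        by (simp add: G_def scalar_prod_def if_distrib[of "\<lambda>x. x * _"] sum.If_cases)
    next
      case False
      have "row G i = row N i"
        using i N False by (auto simp: G_def row_def)
      then have "(G *\<^sub>v v) $ i = (N *\<^sub>v v) $ i"
        using i N G by simp
      with i False show ?thesis by (simp add: Nv unit_vec_def)
    qed
  qed (simp add: G_def)
  define R where "R = replace_col G (G *\<^sub>v v) m"
  have R: "R \<in> carrier_mat n n" using G by (simp add: R_def replace_col_def)
  have delete_R: "mat_delete R k m = mat_delete N k m"
    using N G by (intro eq_matI) (auto simp: R_def replace_col_def G_def mat_delete_def insert_index_def)
  have "det R = (\<Sum>i<n. R $$ (i,m) * cofactor R i m)" by (rule laplace_expansion_column[OF R m])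
  also have "\<dots> = (\<Sum>i<n. if i = k then v $ l * cofactor R k m else 0)"
    using G m by (intro sum.cong) (auto simp: R_def replace_col_def Gv unit_vec_def)
  also have "\<dots> = v $ l * cofactor N k m"
    using k by (simp add: cofactor_def delete_R)
  finally show ?thesis using cramer_lemma_mat[OF G v m] det_G by (simp add: R_def)
qed

lemma cofactor_left_null_vector:
  fixes N :: "'a::comm_ring_1 mat"
  assumes N: "N \<in> carrier_mat n n" and w: "w \<in> carrier_vec n"
    and wN: "transpose_mat N *\<^sub>v w = 0\<^sub>v n"
    and k: "k < n" and l: "l < n" and m: "m < n"
  shows "w $ m * cofactor N l k = w $ l * cofactor N m k"
proof -
  have "transpose_mat N \<in> carrier_mat n n" using N by simp
  from cofactor_right_null_vector[OF this w wN k l m] show ?thesis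
    by (simp add: cofactor_transpose_mat[OF N])
qed

lemma cofactor_eq_null_vector_product:
  fixes N :: "'a::field mat"
  assumes N: "N \<in> carrier_mat n n"
    and v: "v \<in> carrier_vec n" and Nv: "N *\<^sub>v v = 0\<^sub>v n"
    and w: "w \<in> carrier_vec n" and wN: "transpose_mat N *\<^sub>v w = 0\<^sub>v n"
    and p: "p < n" and q: "q < n" and vp: "v $ p \<noteq> 0" and wq: "w $ q \<noteq> 0"
  shows "\<exists>c. \<forall>k<n. \<forall>l<n. cofactor N k l = c * w $ k * v $ l"
proof (intro exI allI impI)
  fix k l assume k: "k < n" and l: "l < n"
  have "v $ p * w $ q * cofactor N k l = w $ q * (v $ p * cofactor N k l)"
    by (simp add: ac_simps)
  also have "\<dots> = v $ l * (w $ q * cofactor N k p)"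
    by (simp add: cofactor_right_null_vector[OF N v Nv k l p] ac_simps)
  also have "\<dots> = v $ l * w $ k * cofactor N q p"
    by (simp add: cofactor_left_null_vector[OF N w wN p k q])
  finally show "cofactor N k l = cofactor N q p / (w $ q * v $ p) * w $ k * v $ l"
    using vp wq by (simp add: field_simps)
qed

lemma mult_col_adj_mat_singular:
  fixes N :: "'a::comm_ring_1 mat"
  assumes N: "N \<in> carrier_mat n n" and "det N = 0" and "l < n"
  shows "N *\<^sub>v col (adj_mat N) l = 0\<^sub>v n"
proof -
  have "N *\<^sub>v col (adj_mat N) l = col (N * adj_mat N) l"
    using col_mult2[OF N adj_mat(1)[OF N] assms(3)] by simp
  also have "\<dots> = 0\<^sub>v n"
    using adj_mat(2)[OF N] assms(2,3) by (auto simp: col_def)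
  finally show ?thesis .
qed

section \<open>The characteristic polynomial\<close>

lemma transpose_char_matrix:
  assumes "B \<in> carrier_mat n n"
  shows "transpose_mat (char_matrix B x) = char_matrix (transpose_mat B) x"
  using assms by (intro eq_matI) (auto simp: char_matrix_def)

lemma char_poly_root_iff_det:
  fixes B :: "'a::field mat"
  assumes "B \<in> carrier_mat n n"
  shows "poly (char_poly B) x = 0 \<longleftrightarrow> det (char_matrix B x) = 0"
  using eigenvalue_root_char_poly[OF assms] eigenvalue_det[OF assms] by simp

lemma poly_pderiv_char_poly:
  fixes B :: "'a::field mat"
  assumes B: "B \<in> carrier_mat n n"
  shows "poly (pderiv (char_poly B)) x = (-1) ^ (n - 1) * (\<Sum>i<n. cofactor (char_matrix B x) i i)"
proof -
  have "poly (char_poly (mat_delete B i i)) x = (-1) ^ (n - 1) * cofactor (char_matrix B x) i i"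
    if i: "i < n" for i
  proof -
    have D: "mat_delete B i i \<in> carrier_mat (n - 1) (n - 1)" by (rule mat_delete_carrier[OF B])
    have "- char_matrix (mat_delete B i i) x = (-1) \<cdot>\<^sub>m mat_delete (char_matrix B x) i i"
      using B i by (intro eq_matI) (auto simp: char_matrix_def mat_delete_def)
    moreover have "char_matrix B x \<in> carrier_mat n n" using B by simp
    ultimately show ?thesis
      using D by (simp add: char_poly_matrix[OF D] cofactor_def power_add[symmetric])
  qed
  then show ?thesis
    by (simp add: pderiv_char_poly[OF B] poly_sum sum_distrib_left)
qed

lemma order_eq_1_iff:
  fixes p :: "'a::{idom,semiring_char_0} poly"
  assumes "p \<noteq> 0"
  shows "order x p = 1 \<longleftrightarrow> poly p x = 0 \<and> poly (pderiv p) x \<noteq> 0"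
proof
  assume order: "order x p = 1"
  then have root: "poly p x = 0" using assms order_root by fastforce
  then have "order x (pderiv p) = 0" using order order_pderiv[OF assms root] by simp
  moreover have "pderiv p \<noteq> 0" using root assms pderiv_iszero by force
  ultimately show "poly p x = 0 \<and> poly (pderiv p) x \<noteq> 0" using root order_root by blast
next
  assume simple: "poly p x = 0 \<and> poly (pderiv p) x \<noteq> 0"
  then have "order x (pderiv p) = 0" by (simp add: order_0I)
  then show "order x p = 1" using order_pderiv[OF assms] simple by simp
qed

lemma char_poly_nonzero:
  assumes "B \<in> carrier_mat n n"
  shows "char_poly B \<noteq> 0"
  using degree_monic_char_poly[OF assms] by auto

lemma order_char_poly_eq_1_iff:
  fixes B :: "'a::field_char_0 mat"
  assumes B: "B \<in> carrier_mat n n"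
  shows "order x (char_poly B) = 1 \<longleftrightarrow>
    det (char_matrix B x) = 0 \<and> (\<Sum>i<n. cofactor (char_matrix B x) i i) \<noteq> 0"
proof -
  from order_eq_1_iff[OF char_poly_nonzero[OF B], of x] show ?thesis
    by (simp add: char_poly_root_iff_det[OF B] poly_pderiv_char_poly[OF B])
qed

section \<open>Positive simple eigenvalues through the adjugate\<close>

definition positive_simple_eigenvalue :: "real mat \<Rightarrow> real \<Rightarrow> bool" where
  "positive_simple_eigenvalue M lam \<longleftrightarrow> 0 < lam \<and> order lam (char_poly M) = 1 \<and>
     (\<exists>v w. eigenvector M v lam \<and> eigenvector (transpose_mat M) w lam \<and>
        (\<forall>i < dim_row M. 0 < v $ i \<and> 0 < w $ i))"

lemma good_matrix_iff:
  "good_matrix M \<longleftrightarrow> alg_positive M \<and> (\<exists>lam. positive_simple_eigenvalue M lam)"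
  unfolding good_matrix_def positive_simple_eigenvalue_def by blast

lemma cofactors_sign_definite_at_positive_simple_eigenvalue:
  fixes M :: "real mat"
  assumes M: "M \<in> carrier_mat n n" and lam: "positive_simple_eigenvalue M lam"
  shows "\<exists>c. \<forall>i<n. \<forall>j<n. 0 < c * cofactor (char_matrix M lam) i j"
proof (cases "n = 0")
  case False
  let ?N = "char_matrix M lam"
  obtain v w where v: "eigenvector M v lam" and w: "eigenvector (transpose_mat M) w lam"
    and pos: "\<And>i. i < n \<Longrightarrow> 0 < v $ i \<and> 0 < w $ i" and simple: "order lam (char_poly M) = 1"
    using lam M by (auto simp: positive_simple_eigenvalue_def)
  have N: "?N \<in> carrier_mat n n" and MT: "transpose_mat M \<in> carrier_mat n n" using M by auto
  have Nv: "v \<in> carrier_vec n" "?N *\<^sub>v v = 0\<^sub>v n"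
    using v eigenvector_char_matrix[OF M] by auto
  have wN: "w \<in> carrier_vec n" "transpose_mat ?N *\<^sub>v w = 0\<^sub>v n"
    using w eigenvector_char_matrix[OF MT] transpose_char_matrix[OF M] by auto
  have "\<exists>c. \<forall>k<n. \<forall>l<n. cofactor ?N k l = c * w $ k * v $ l"
    by (rule cofactor_eq_null_vector_product[OF N Nv wN, of 0 0]) (use pos[of 0] False in auto)
  then obtain c where c: "\<And>k l. k < n \<Longrightarrow> l < n \<Longrightarrow> cofactor ?N k l = c * w $ k * v $ l"
    by blast
  have "c \<noteq> 0" using simple order_char_poly_eq_1_iff[OF M] c by auto
  then have "0 < c * c" using not_real_square_gt_zero by blast
  then have "0 < c * cofactor ?N i j" if "i < n" "j < n" for i j
    using c[OF that] pos that by (simp add: mult.assoc[symmetric])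
  then show ?thesis by blast
qed simp

lemma positive_simple_eigenvalue_of_cofactors:
  fixes B :: "real mat"
  assumes B: "B \<in> carrier_mat n n" and x: "0 < x" and singular: "det (char_matrix B x) = 0"
    and trace: "(\<Sum>i<n. cofactor (char_matrix B x) i i) \<noteq> 0"
    and pos: "\<And>i j. i < n \<Longrightarrow> j < n \<Longrightarrow> 0 < c * cofactor (char_matrix B x) i j"
  shows "positive_simple_eigenvalue B x"
proof -
  let ?N = "char_matrix B x" and ?NT = "char_matrix (transpose_mat B) x"
  have n: "0 < n" using trace by (cases n) auto
  have N: "?N \<in> carrier_mat n n" and BT: "transpose_mat B \<in> carrier_mat n n"
    and NT: "?NT \<in> carrier_mat n n" using B by auto
  have NT_eq: "?NT = transpose_mat ?N" by (simp add: transpose_char_matrix[OF B])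
  have singular_T: "det ?NT = 0" using singular det_transpose[OF N] NT_eq by simp
  have col: "col (adj_mat ?N) 0 \<in> carrier_vec n" "col (adj_mat ?NT) 0 \<in> carrier_vec n"
    using adj_mat(1)[OF N] adj_mat(1)[OF NT] by auto
  define v where "v = c \<cdot>\<^sub>v col (adj_mat ?N) 0"
  define w where "w = c \<cdot>\<^sub>v col (adj_mat ?NT) 0"
  have v: "v \<in> carrier_vec n" and w: "w \<in> carrier_vec n" using col by (auto simp: v_def w_def)
  have v_pos: "0 < v $ i" and w_pos: "0 < w $ i" if "i < n" for i
    using that n pos[of 0 i] pos[of i 0] N NT
    by (auto simp: v_def w_def adj_mat_def NT_eq cofactor_transpose_mat[OF N])
  have "?N *\<^sub>v v = 0\<^sub>v n"
    using mult_col_adj_mat_singular[OF N singular n] by (auto simp: v_def mult_mat_vec[OF N col(1)])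
  moreover have "?NT *\<^sub>v w = 0\<^sub>v n"
    using mult_col_adj_mat_singular[OF NT singular_T n] by (auto simp: w_def mult_mat_vec[OF NT col(2)])
  moreover have "v \<noteq> 0\<^sub>v n" "w \<noteq> 0\<^sub>v n" using v_pos[OF n] w_pos[OF n] n by auto
  ultimately have "eigenvector B v x" "eigenvector (transpose_mat B) w x"
    using v w eigenvector_char_matrix[OF B] eigenvector_char_matrix[OF BT] by blast+
  moreover have "order x (char_poly B) = 1"
    using order_char_poly_eq_1_iff[OF B] singular trace by simp
  ultimately show ?thesis
    using x B v_pos w_pos by (auto simp: positive_simple_eigenvalue_def)
qed

section \<open>Persistence under perturbation\<close>

lemma poly_sign_change_at_simple_root:
  fixes p :: "real poly"
  assumes root: "poly p a = 0" and simple: "poly (pderiv p) a \<noteq> 0" and d: "0 < d"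
  shows "\<exists>\<delta>>0. \<delta> < d \<and> poly p (a - \<delta>) * poly p (a + \<delta>) < 0"
proof -
  \<comment> \<open>p'(a) p has the positive derivative p'(a)^2 at a, so it increases through its root a.\<close>
  define D where "D = poly (pderiv p) a"
  define q where "q x = D * poly p x" for x
  have "(q has_real_derivative D * D) (at a)"
    unfolding q_def D_def by (intro DERIV_cmult poly_DERIV)
  moreover have DD: "0 < D * D" using simple not_real_square_gt_zero unfolding D_def by blast
  ultimately obtain d1 d2 where d1: "0 < d1" "\<And>h. 0 < h \<Longrightarrow> h < d1 \<Longrightarrow> q a < q (a + h)"
    and d2: "0 < d2" "\<And>h. 0 < h \<Longrightarrow> h < d2 \<Longrightarrow> q (a - h) < q a"
    using DERIV_pos_inc_right DERIV_pos_inc_left by metis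
  define \<delta> where "\<delta> = min d (min d1 d2) / 2"
  have \<delta>: "0 < \<delta>" "\<delta> < d" "\<delta> < d1" "\<delta> < d2" using d d1 d2 by (auto simp: \<delta>_def)
  have "q (a - \<delta>) * q (a + \<delta>) < 0"
    using d1(2)[of \<delta>] d2(2)[of \<delta>] \<delta> root by (simp add: q_def mult_neg_pos)
  then have "D * D * (poly p (a - \<delta>) * poly p (a + \<delta>)) < 0"
    by (simp add: q_def algebra_simps)
  then show ?thesis using \<delta> DD by (auto simp: mult_less_0_iff)
qed

lemma eventually_char_poly_root_near:
  fixes B :: "'b \<Rightarrow> real mat"
  assumes M: "M \<in> carrier_mat n n" and root: "poly (char_poly M) lam = 0"
    and simple: "poly (pderiv (char_poly M)) lam \<noteq> 0"
    and B: "\<And>t. B t \<in> carrier_mat n n"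
    and lim: "\<And>i j. i < n \<Longrightarrow> j < n \<Longrightarrow> ((\<lambda>t. B t $$ (i,j)) \<longlongrightarrow> M $$ (i,j)) F"
    and d: "0 < d"
  shows "\<forall>\<^sub>F t in F. \<exists>x. \<bar>x - lam\<bar> < d \<and> poly (char_poly (B t)) x = 0"
proof -
  obtain \<delta> where \<delta>: "0 < \<delta>" "\<delta> < d"
    and sign_change: "poly (char_poly M) (lam - \<delta>) * poly (char_poly M) (lam + \<delta>) < 0"
    using poly_sign_change_at_simple_root[OF root simple d] by blast
  have lim_poly: "((\<lambda>t. poly (char_poly (B t)) y) \<longlongrightarrow> poly (char_poly M) y) F" for y
    unfolding char_poly_matrix[OF B] char_poly_matrix[OF M]
  proof (rule tendsto_det[of _ n])
    fix i j assume "i < n" "j < n"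
    moreover have "dim_row (B t) = n" for t using B[of t] by auto
    ultimately show "((\<lambda>t. (- char_matrix (B t) y) $$ (i, j)) \<longlongrightarrow> (- char_matrix M y) $$ (i, j)) F"
      using M B by (auto simp: char_matrix_def intro!: tendsto_intros lim)
  qed (use M B in auto)
  have "\<forall>\<^sub>F t in F. poly (char_poly (B t)) (lam - \<delta>) * poly (char_poly (B t)) (lam + \<delta>) < 0"
    by (rule order_tendstoD(2)[OF tendsto_mult[OF lim_poly lim_poly] sign_change])
  then show ?thesis
  proof (rule eventually_mono)
    fix t assume "poly (char_poly (B t)) (lam - \<delta>) * poly (char_poly (B t)) (lam + \<delta>) < 0"
    then obtain x where "lam - \<delta> < x" "x < lam + \<delta>" "poly (char_poly (B t)) x = 0"
      using poly_IVT[of "lam - \<delta>" "lam + \<delta>"] \<delta> by auto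
    then show "\<exists>x. \<bar>x - lam\<bar> < d \<and> poly (char_poly (B t)) x = 0" using \<delta> by (intro exI[of _ x]) auto
  qed
qed

lemma eventually_cofactors_sign_definite:
  fixes B :: "'b \<Rightarrow> real mat"
  assumes M: "M \<in> carrier_mat n n" and B: "\<And>t. B t \<in> carrier_mat n n"
    and lim: "\<And>i j. i < n \<Longrightarrow> j < n \<Longrightarrow> ((\<lambda>t. B t $$ (i,j)) \<longlongrightarrow> M $$ (i,j)) F"
    and c: "\<And>i j. i < n \<Longrightarrow> j < n \<Longrightarrow> 0 < c * cofactor (char_matrix M lam) i j"
    and trace: "(\<Sum>i<n. cofactor (char_matrix M lam) i i) \<noteq> 0"
  shows "\<forall>\<^sub>F p in F \<times>\<^sub>F nhds lam.
    (\<forall>i<n. \<forall>j<n. 0 < c * cofactor (char_matrix (B (fst p)) (snd p)) i j) \<and>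
    (\<Sum>i<n. cofactor (char_matrix (B (fst p)) (snd p)) i i) \<noteq> 0"
proof -
  let ?N = "\<lambda>p. char_matrix (B (fst p)) (snd p)" and ?G = "F \<times>\<^sub>F nhds lam"
  have N: "?N p \<in> carrier_mat n n" for p using B by simp
  have N0: "char_matrix M lam \<in> carrier_mat n n" using M by simp
  have lim_N: "((\<lambda>p. ?N p $$ (i,j)) \<longlongrightarrow> char_matrix M lam $$ (i,j)) ?G" if "i < n" "j < n" for i j
  proof -
    have "filterlim fst F ?G" "((\<lambda>p. snd p) \<longlongrightarrow> lam) ?G"
      by (simp_all add: filterlim_def filtermap_fst_prod_filter filtermap_snd_prod_filter)
    moreover have "dim_row (B t) = n" for t using B[of t] by auto
    ultimately show ?thesis
      using that M by (auto simp: char_matrix_def intro!: tendsto_intros filterlim_compose[OF lim])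
  qed
  have lim_cof: "((\<lambda>p. cofactor (?N p) i j) \<longlongrightarrow> cofactor (char_matrix M lam) i j) ?G"
    if "i < n" "j < n" for i j
    by (rule tendsto_cofactor[OF N N0 lim_N that])
  have "\<forall>\<^sub>F p in ?G. \<forall>i\<in>{..<n}. \<forall>j\<in>{..<n}. 0 < c * cofactor (?N p) i j"
  proof (intro eventually_ball_finite ballI finite_lessThan)
    fix i j assume ij: "i \<in> {..<n}" "j \<in> {..<n}"
    with lim_cof have "((\<lambda>p. c * cofactor (?N p) i j) \<longlongrightarrow> c * cofactor (char_matrix M lam) i j) ?G"
      by (intro tendsto_mult_left) auto
    then show "\<forall>\<^sub>F p in ?G. 0 < c * cofactor (?N p) i j"
      by (rule order_tendstoD(1)) (use c ij in auto)
  qed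
  moreover have "((\<lambda>p. \<Sum>i<n. cofactor (?N p) i i) \<longlongrightarrow> (\<Sum>i<n. cofactor (char_matrix M lam) i i)) ?G"
    using lim_cof by (intro tendsto_sum) auto
  then have "\<forall>\<^sub>F p in ?G. (\<Sum>i<n. cofactor (?N p) i i) \<noteq> 0"
    using trace by (rule tendsto_imp_eventually_ne)
  ultimately show ?thesis by eventually_elim auto
qed

lemma eventually_alg_positive:
  fixes B :: "'b \<Rightarrow> real mat"
  assumes M: "M \<in> carrier_mat n n" and "alg_positive M"
    and B: "\<And>t. B t \<in> carrier_mat n n"
    and lim: "\<And>i j. i < n \<Longrightarrow> j < n \<Longrightarrow> ((\<lambda>t. B t $$ (i,j)) \<longlongrightarrow> M $$ (i,j)) F"
  shows "\<forall>\<^sub>F t in F. alg_positive (B t)"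
proof -
  obtain f where f: "\<And>i j. i < n \<Longrightarrow> j < n \<Longrightarrow> 0 < poly_mat f M $$ (i,j)"
    using \<open>alg_positive M\<close> M by (auto simp: alg_positive_def)
  have dims: "dim_row (B t) = n" for t using B[of t] by auto
  have "((\<lambda>t. poly_mat f (B t) $$ (i,j)) \<longlongrightarrow> poly_mat f M $$ (i,j)) F" if "i < n" "j < n" for i j
    using that M by (auto simp: poly_mat_def dims intro!: tendsto_sum tendsto_mult_left
        tendsto_power_mat[OF B M lim])
  then have "\<forall>\<^sub>F t in F. \<forall>i\<in>{..<n}. \<forall>j\<in>{..<n}. 0 < poly_mat f (B t) $$ (i,j)"
    using f by (intro eventually_ball_finite ballI finite_lessThan order_tendstoD(1)) auto
  then show ?thesis by eventually_elim (auto simp: alg_positive_def dims)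
qed

lemma eventually_positive_simple_eigenvalue:
  fixes B :: "'b \<Rightarrow> real mat"
  assumes M: "M \<in> carrier_mat n n" and lam: "positive_simple_eigenvalue M lam"
    and B: "\<And>t. B t \<in> carrier_mat n n"
    and lim: "\<And>i j. i < n \<Longrightarrow> j < n \<Longrightarrow> ((\<lambda>t. B t $$ (i,j)) \<longlongrightarrow> M $$ (i,j)) F"
  shows "\<forall>\<^sub>F t in F. \<exists>x. positive_simple_eigenvalue (B t) x"
proof -
  have "0 < lam" and simple: "order lam (char_poly M) = 1"
    using lam by (auto simp: positive_simple_eigenvalue_def)
  obtain c where c: "\<And>i j. i < n \<Longrightarrow> j < n \<Longrightarrow> 0 < c * cofactor (char_matrix M lam) i j"
    using cofactors_sign_definite_at_positive_simple_eigenvalue[OF M lam] by blast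
  have trace: "(\<Sum>i<n. cofactor (char_matrix M lam) i i) \<noteq> 0"
    using simple order_char_poly_eq_1_iff[OF M] by simp
  obtain Pf Pg where Pf: "eventually Pf F" and Pg: "eventually Pg (nhds lam)"
    and PfPg: "\<And>t x. Pf t \<Longrightarrow> Pg x \<Longrightarrow>
      (\<forall>i<n. \<forall>j<n. 0 < c * cofactor (char_matrix (B t) x) i j) \<and>
      (\<Sum>i<n. cofactor (char_matrix (B t) x) i i) \<noteq> 0"
    using eventually_cofactors_sign_definite[OF M B lim c trace]
    unfolding eventually_prod_filter by auto
  obtain d where "0 < d" and d: "\<And>x. dist x lam < d \<Longrightarrow> Pg x"
    using Pg unfolding eventually_nhds_metric by blast
  have "poly (char_poly M) lam = 0" and "poly (pderiv (char_poly M)) lam \<noteq> 0"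
    using simple order_eq_1_iff[OF char_poly_nonzero[OF M]] by auto
  then have "\<forall>\<^sub>F t in F. \<exists>x. \<bar>x - lam\<bar> < min d lam \<and> poly (char_poly (B t)) x = 0"
    using \<open>0 < d\<close> \<open>0 < lam\<close> by (intro eventually_char_poly_root_near[OF M _ _ B lim]) auto
  with Pf show ?thesis
  proof eventually_elim
    case (elim t)
    then obtain x where x: "\<bar>x - lam\<bar> < min d lam" and root: "poly (char_poly (B t)) x = 0"
      by blast
    then have "Pg x" by (intro d) (simp add: dist_real_def)
    with elim PfPg have "positive_simple_eigenvalue (B t) x"
      using x root char_poly_root_iff_det[OF B]
      by (intro positive_simple_eigenvalue_of_cofactors[OF B, where c = c]) auto
    then show ?case by blast
  qed
qed

lemma eventually_good_matrix:
  fixes B :: "'b \<Rightarrow> real mat"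
  assumes M: "M \<in> carrier_mat n n" and "good_matrix M"
    and B: "\<And>t. B t \<in> carrier_mat n n"
    and lim: "\<And>i j. i < n \<Longrightarrow> j < n \<Longrightarrow> ((\<lambda>t. B t $$ (i,j)) \<longlongrightarrow> M $$ (i,j)) F"
  shows "\<forall>\<^sub>F t in F. good_matrix (B t)"
proof -
  obtain lam where "alg_positive M" and "positive_simple_eigenvalue M lam"
    using \<open>good_matrix M\<close> by (auto simp: good_matrix_iff)
  have "\<forall>\<^sub>F t in F. alg_positive (B t)"
    using \<open>alg_positive M\<close> by (rule eventually_alg_positive[OF M _ B lim])
  moreover have "\<forall>\<^sub>F t in F. \<exists>x. positive_simple_eigenvalue (B t) x"
    using \<open>positive_simple_eigenvalue M lam\<close> by (rule eventually_positive_simple_eigenvalue[OF M _ B lim])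
  ultimately show ?thesis by eventually_elim (auto simp: good_matrix_iff)
qed

section \<open>Realising a super-pattern\<close>

definition sign_value :: "sign \<Rightarrow> real" where
  "sign_value s = (case s of Pos \<Rightarrow> 1 | Neg \<Rightarrow> -1 | Zer \<Rightarrow> 0)"

lemma perturbation_in_qual_class_super_pattern:
  assumes M: "M \<in> qual_class A" and X: "super_pattern X A" and e: "0 < e"
  shows "M + e \<cdot>\<^sub>m map_mat sign_value X \<in> qual_class X"
proof -
  have dims: "dim_row X = dim_row A" "dim_col X = dim_col A" "M \<in> carrier_mat (dim_row A) (dim_col A)"
    using M X by (auto simp: qual_class_def super_pattern_def)
  have "(X $$ (i,j) = Pos \<longrightarrow> 0 < M $$ (i,j) + e * sign_value (X $$ (i,j))) \<and>
        (X $$ (i,j) = Neg \<longrightarrow> M $$ (i,j) + e * sign_value (X $$ (i,j)) < 0) \<and>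
        (X $$ (i,j) = Zer \<longrightarrow> M $$ (i,j) + e * sign_value (X $$ (i,j)) = 0)"
    if "i < dim_row A" "j < dim_col A" for i j
  proof -
    have "X $$ (i,j) = A $$ (i,j) \<or> A $$ (i,j) = Zer" using X that by (auto simp: super_pattern_def)
    moreover have "(A $$ (i,j) = Pos \<longrightarrow> M $$ (i,j) > 0) \<and> (A $$ (i,j) = Neg \<longrightarrow> M $$ (i,j) < 0) \<and>
        (A $$ (i,j) = Zer \<longrightarrow> M $$ (i,j) = 0)" using M that by (auto simp: qual_class_def)
    ultimately show ?thesis using e by (cases "X $$ (i,j)"; cases "A $$ (i,j)") (auto simp: sign_value_def)
  qed
  then show ?thesis using dims by (auto simp: qual_class_def)
qed

theorem lemma3p12:
  fixes A X :: "sign mat" and n :: nat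
  assumes "A \<in> carrier_mat n n"
    and "min_AP_irreducible A"
    and "\<forall>i < n. A $$ (i,i) = Zer"
    and "\<forall>\<alpha> \<in> irr_components (pos_part A). \<forall>\<beta> \<in> irr_components (pos_part A).
           \<alpha> \<noteq> \<beta> \<longrightarrow> (\<forall>i \<in> \<alpha>. \<forall>j \<in> \<beta>. A $$ (i,j) \<noteq> Pos)"
    and "\<exists>M \<in> qual_class A. good_matrix M"
    and "super_pattern X A"
    and "\<exists>!p. p \<in> {..<n} \<times> {..<n} \<and> X $$ p \<noteq> A $$ p"
  shows "\<exists>M \<in> qual_class X. good_matrix M"
proof -
  obtain M where MA: "M \<in> qual_class A" and good: "good_matrix M" using assms(5) by blast
  have M: "M \<in> carrier_mat n n" using MA assms(1) by (auto simp: qual_class_def)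
  have X: "X \<in> carrier_mat n n" using assms(1,6) by (auto simp: super_pattern_def)
  define B where "B e = M + e \<cdot>\<^sub>m map_mat sign_value X" for e :: real
  have "\<forall>\<^sub>F e in at_right 0. good_matrix (B e)"
  proof (rule eventually_good_matrix[OF M good])
    show "B e \<in> carrier_mat n n" for e using M X by (simp add: B_def)
    show "((\<lambda>e. B e $$ (i,j)) \<longlongrightarrow> M $$ (i,j)) (at_right 0)" if "i < n" "j < n" for i j
      using that M X by (auto simp: B_def intro!: tendsto_eq_intros)
  qed
  moreover have "\<forall>\<^sub>F e in at_right (0::real). 0 < e" by (rule eventually_at_right_less)
  ultimately obtain e where "good_matrix (B e)" "0 < e"
    using eventually_happens'[OF trivial_limit_at_right_real eventually_conj] by blast
  then show ?thesis
    using perturbation_in_qual_class_super_pattern[OF MA assms(6)] by (auto simp: B_def)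
qed

end
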